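(* For every index coding instance $\mathcal{I}=\{(i\mid A_i):i\in[m]\}$, the optimal value $\beta_{\text{FPCC}}(\mathcal{I})$ is attained by a family $(M_j,\gamma_j)_{j\in[n]}$ in which every $M_j$ is a minimal partial clique set; equivalently, restricting the FPCC optimization to families of minimal partial clique sets does not change its value.
   Context: $\beta_{\text{MDS}}(M)=|M|-\min_{i\in M}|M\cap A_i|$ for nonempty $M\subseteq[m]$. $\beta_{\text{FPCC}}(\mathcal{I})=\min\sum_{j\in[n]}\gamma_j\beta_{\text{MDS}}(M_j)$ over finite families of nonempty (possibly overlapping) subsets $M_1,\dots,M_n\subseteq[m]$ and weights $\gamma_j\in[0,1]$ with $\sum_{j:\,i\in M_j}\gamma_j\ge1$ for every $i\in[m]$. A nonempty set $M\subseteq[m]$ is a minimal partial clique set if for every partition of $M$ into nonempty disjoint subsets $M_1,\dots,M_n$ one has $\beta_{\text{MDS}}(M)\le\sum_{j}\beta_{\text{MDS}}(M_j)$. *)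

theory Defs
  imports Complex_Main "HOL-Library.Disjoint_Sets"
begin

definition index_coding_instance :: "nat \<Rightarrow> (nat \<Rightarrow> nat set) \<Rightarrow> bool" where
  "index_coding_instance m A \<longleftrightarrow> (\<forall>i\<in>{1..m}. A i \<subseteq> {1..m} - {i})"

definition beta_MDS :: "(nat \<Rightarrow> nat set) \<Rightarrow> nat set \<Rightarrow> real" where
  "beta_MDS A M = real (card M) - real (Min ((\<lambda>i. card (M \<inter> A i)) ` M))"

definition fpcc_feasible ::
  "nat \<Rightarrow> nat \<Rightarrow> (nat \<Rightarrow> nat set) \<Rightarrow> (nat \<Rightarrow> real) \<Rightarrow> bool" where
  "fpcc_feasible m n Ms \<gamma> \<longleftrightarrow>
     (\<forall>j<n. Ms j \<noteq> {} \<and> Ms j \<subseteq> {1..m} \<and> 0 \<le> \<gamma> j \<and> \<gamma> j \<le> 1) \<and>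
     (\<forall>i\<in>{1..m}. (\<Sum>j\<in>{j. j < n \<and> i \<in> Ms j}. \<gamma> j) \<ge> 1)"

definition fpcc_cost ::
  "(nat \<Rightarrow> nat set) \<Rightarrow> nat \<Rightarrow> (nat \<Rightarrow> nat set) \<Rightarrow> (nat \<Rightarrow> real) \<Rightarrow> real" where
  "fpcc_cost A n Ms \<gamma> = (\<Sum>j<n. \<gamma> j * beta_MDS A (Ms j))"

definition beta_FPCC :: "nat \<Rightarrow> (nat \<Rightarrow> nat set) \<Rightarrow> real" where
  "beta_FPCC m A = Inf {fpcc_cost A n Ms \<gamma> | n Ms \<gamma>. fpcc_feasible m n Ms \<gamma>}"

definition minimal_partial_clique_set :: "nat \<Rightarrow> (nat \<Rightarrow> nat set) \<Rightarrow> nat set \<Rightarrow> bool" where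
  "minimal_partial_clique_set m A M \<longleftrightarrow> M \<noteq> {} \<and> M \<subseteq> {1..m} \<and>
     (\<forall>P. partition_on M P \<longrightarrow> beta_MDS A M \<le> (\<Sum>B\<in>P. beta_MDS A B))"

end

theory Submission
  imports Defs "HOL-Analysis.Analysis"
begin

text \<open>Splitting a set \<open>M\<close> along a partition that minimises the total \<open>\<beta>\<^sub>M\<^sub>D\<^sub>S\<close> of its
  blocks costs at most \<open>\<beta>\<^sub>M\<^sub>D\<^sub>S(M)\<close>, and every block of such an optimal partition is a
  minimal partial clique set. Hence any feasible family can be traded for a weighting of
  the finitely many minimal partial clique sets, of no larger cost: a minimal set receives
  the total weight of the blocks equal to it, capped at \<open>1\<close> (harmless, as
  \<open>\<beta>\<^sub>M\<^sub>D\<^sub>S \<ge> 0\<close>). On this fixed family the feasible weights form a compact polytope, so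
  the linear cost attains its minimum there, and that minimum is the optimum of the
  whole FPCC problem.\<close>

lemma partition_on_singleton_iff: "partition_on {x} P \<longleftrightarrow> P = {{x}}"
proof
  assume P: "partition_on {x} P"
  have "B = {x}" if "B \<in> P" for B
    using that partition_onD1[OF P] partition_onD3[OF P] by (metis Union_upper subset_singletonD)
  moreover have "P \<noteq> {}" using partition_onD1[OF P] by auto
  ultimately show "P = {{x}}" by blast
qed (simp add: partition_on_space)

lemma partition_on_replace_block:
  assumes P: "partition_on M P" and B: "B \<in> P" and Q: "partition_on B Q"
  shows "partition_on M (P - {B} \<union> Q)" and "(P - {B}) \<inter> Q = {}"
proof -
  have QB: "C \<subseteq> B" "C \<noteq> {}" if "C \<in> Q" for C
    using that partition_onD1[OF Q] partition_onD3[OF Q] by auto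
  have PB: "disjnt C B" if "C \<in> P - {B}" for C
    using that B partition_onD2[OF P] by (auto simp: disjoint_def disjnt_def)
  show "(P - {B}) \<inter> Q = {}"
    using QB PB by (fastforce simp: disjnt_def)
  show "partition_on M (P - {B} \<union> Q)"
  proof (rule partition_onI)
    show "\<Union>(P - {B} \<union> Q) = M"
      using partition_onD1[OF P] partition_onD1[OF Q] B by blast
    show "disjnt C D" if "C \<in> P - {B} \<union> Q" "D \<in> P - {B} \<union> Q" "C \<noteq> D" for C D
    proof (cases "C \<in> Q"; cases "D \<in> Q")
      assume "C \<in> Q" "D \<in> Q"
      then show ?thesis using \<open>C \<noteq> D\<close> partition_onD2[OF Q] by (simp add: pairwiseD)
    next
      assume "C \<in> Q" "D \<notin> Q"
      then show ?thesis using that QB PB by (metis Un_iff disjnt_subset1 disjnt_sym)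
    next
      assume "C \<notin> Q" "D \<in> Q"
      then show ?thesis using that QB PB by (metis Un_iff disjnt_subset1 disjnt_sym)
    next
      assume "C \<notin> Q" "D \<notin> Q"
      then show ?thesis using that partition_onD2[OF P] by (auto simp: pairwiseD)
    qed
    show "{} \<notin> P - {B} \<union> Q"
      using partition_onD3[OF P] partition_onD3[OF Q] by blast
  qed
qed

lemma partition_on_sum_of_bool_mem:
  assumes "partition_on M P" "finite P"
  shows "(\<Sum>B\<in>P. of_bool (i \<in> B)) = (of_bool (i \<in> M) :: 'a::semiring_1)"
proof (cases "i \<in> M")
  case True
  then obtain B where B: "B \<in> P" "i \<in> B" using partition_onD1[OF assms(1)] by blast
  have "P \<inter> {B'. i \<in> B'} = {B}"
    using B partition_onD2[OF assms(1)] by (auto simp: disjoint_def)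
  then show ?thesis using True assms(2) by simp
next
  case False
  then show ?thesis using partition_onD1[OF assms(1)] by (auto intro!: sum.neutral)
qed

lemma sum_weighted_subcollections:
  fixes \<gamma> :: "nat \<Rightarrow> 'a::comm_semiring_0"
  assumes "finite I" "\<And>j. j < n \<Longrightarrow> P j \<subseteq> I"
  shows "(\<Sum>S\<in>I. (\<Sum>j<n. if S \<in> P j then \<gamma> j else 0) * f S) = (\<Sum>j<n. \<gamma> j * (\<Sum>S\<in>P j. f S))"
proof -
  have "(\<Sum>S\<in>I. (\<Sum>j<n. if S \<in> P j then \<gamma> j else 0) * f S)
      = (\<Sum>S\<in>I. \<Sum>j<n. if S \<in> P j then \<gamma> j * f S else 0)"
    by (auto simp: sum_distrib_right intro!: sum.cong)
  also have "\<dots> = (\<Sum>j<n. \<Sum>S\<in>I. if S \<in> P j then \<gamma> j * f S else 0)"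
    by (rule sum.swap)
  also have "\<dots> = (\<Sum>j<n. \<gamma> j * (\<Sum>S\<in>P j. f S))"
    using assms by (simp add: sum.If_cases Int_absorb1 sum_distrib_left)
  finally show ?thesis .
qed

lemma beta_MDS_nonneg:
  assumes "finite M" "M \<noteq> {}"
  shows "0 \<le> beta_MDS A M"
proof -
  obtain i where i: "i \<in> M" using assms by blast
  have "Min ((\<lambda>i. card (M \<inter> A i)) ` M) \<le> card (M \<inter> A i)"
    using assms i by (intro Min_le) auto
  also have "\<dots> \<le> card M" using assms by (intro card_mono) auto
  finally show ?thesis unfolding beta_MDS_def by simp
qed

lemma minimal_partial_clique_set_singleton:
  "i \<in> {1..m} \<Longrightarrow> minimal_partial_clique_set m A {i}"
  by (simp add: minimal_partial_clique_set_def partition_on_singleton_iff)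

lemma finite_minimal_partial_clique_sets: "finite {M. minimal_partial_clique_set m A M}"
  by (rule finite_subset[of _ "Pow {1..m}"]) (auto simp: minimal_partial_clique_set_def)

lemma minimal_partial_clique_set_if_optimal_block:
  assumes "M \<subseteq> {1..m}" and P: "partition_on M P" and B: "B \<in> P"
    and opt: "\<And>P'. partition_on M P' \<Longrightarrow> (\<Sum>C\<in>P. beta_MDS A C) \<le> (\<Sum>C\<in>P'. beta_MDS A C)"
  shows "minimal_partial_clique_set m A B"
  unfolding minimal_partial_clique_set_def
proof (intro conjI allI impI)
  show "B \<noteq> {}" using partition_onD3[OF P] B by blast
  show "B \<subseteq> {1..m}" using partition_onD1[OF P] B assms(1) by blast
  fix Q assume Q: "partition_on B Q"
  have "finite M" using assms(1) finite_subset by blast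
  then have fin: "finite P" "finite Q"
    using finite_elements[OF _ P] finite_elements[OF _ Q] partition_onD1[OF P] B
    by (auto intro: finite_subset)
  have "(\<Sum>C\<in>P. beta_MDS A C) \<le> (\<Sum>C\<in>P - {B} \<union> Q. beta_MDS A C)"
    using opt partition_on_replace_block(1)[OF P B Q] .
  also have "\<dots> = (\<Sum>C\<in>P. beta_MDS A C) - beta_MDS A B + (\<Sum>C\<in>Q. beta_MDS A C)"
    using fin B partition_on_replace_block(2)[OF P B Q]
    by (simp add: sum.union_disjoint sum_diff1)
  finally show "beta_MDS A B \<le> (\<Sum>C\<in>Q. beta_MDS A C)" by simp
qed

lemma exists_minimal_partial_clique_partition:
  assumes "M \<noteq> {}" "M \<subseteq> {1..m}"
  obtains P where "partition_on M P" "\<forall>B\<in>P. minimal_partial_clique_set m A B"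
    "(\<Sum>B\<in>P. beta_MDS A B) \<le> beta_MDS A M"
proof -
  have "finite {P. partition_on M P}"
    using assms(2) finite_subset finitely_many_partition_on by blast
  moreover have "{M} \<in> {P. partition_on M P}" using partition_on_space[OF assms(1)] by simp
  ultimately obtain P where P: "partition_on M P"
    and opt: "\<And>P'. partition_on M P' \<Longrightarrow> (\<Sum>C\<in>P. beta_MDS A C) \<le> (\<Sum>C\<in>P'. beta_MDS A C)"
    using ex_is_arg_min_if_finite[of _ "\<lambda>P. \<Sum>C\<in>P. beta_MDS A C"]
    by (simp add: is_arg_min_def) (metis empty_iff mem_Collect_eq not_le)
  show thesis
  proof
    show "partition_on M P" by (fact P)
    show "\<forall>B\<in>P. minimal_partial_clique_set m A B"
      using minimal_partial_clique_set_if_optimal_block[OF assms(2) P _ opt] by blast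
    show "(\<Sum>B\<in>P. beta_MDS A B) \<le> beta_MDS A M"
      using opt[OF partition_on_space[OF assms(1)]] by simp
  qed
qed

lemma fpcc_feasible_cong:
  assumes "\<And>j. j < n \<Longrightarrow> \<gamma> j = \<gamma>' j"
  shows "fpcc_feasible m n Ms \<gamma> \<longleftrightarrow> fpcc_feasible m n Ms \<gamma>'"
proof -
  have "(\<Sum>j\<in>{j. j < n \<and> i \<in> Ms j}. \<gamma> j) = (\<Sum>j\<in>{j. j < n \<and> i \<in> Ms j}. \<gamma>' j)" for i
    using assms by (intro sum.cong) auto
  then show ?thesis using assms unfolding fpcc_feasible_def by auto
qed

lemma fpcc_cost_cong:
  "(\<And>j. j < n \<Longrightarrow> \<gamma> j = \<gamma>' j) \<Longrightarrow> fpcc_cost A n Ms \<gamma> = fpcc_cost A n Ms \<gamma>'"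
  unfolding fpcc_cost_def by simp

lemma fpcc_cost_mono:
  assumes "\<And>j. j < n \<Longrightarrow> finite (Ms j) \<and> Ms j \<noteq> {} \<and> \<gamma> j \<le> \<gamma>' j"
  shows "fpcc_cost A n Ms \<gamma> \<le> fpcc_cost A n Ms \<gamma>'"
  unfolding fpcc_cost_def using assms beta_MDS_nonneg
  by (intro sum_mono mult_right_mono) auto

lemma fpcc_feasible_min_1:
  assumes "\<And>j. j < n \<Longrightarrow> Ms j \<noteq> {} \<and> Ms j \<subseteq> {1..m} \<and> 0 \<le> \<gamma> j"
    and "\<And>i. i \<in> {1..m} \<Longrightarrow> 1 \<le> (\<Sum>j\<in>{j. j < n \<and> i \<in> Ms j}. \<gamma> j)"
  shows "fpcc_feasible m n Ms (\<lambda>j. min 1 (\<gamma> j))"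
  unfolding fpcc_feasible_def
proof (intro conjI ballI allI impI)
  fix i assume i: "i \<in> {1..m}"
  show "1 \<le> (\<Sum>j\<in>{j. j < n \<and> i \<in> Ms j}. min 1 (\<gamma> j))"
  proof (cases "\<exists>j. j < n \<and> i \<in> Ms j \<and> 1 \<le> \<gamma> j")
    case True
    then obtain j where "j < n" "i \<in> Ms j" "1 \<le> \<gamma> j" by blast
    moreover have "min 1 (\<gamma> j) \<le> (\<Sum>j\<in>{j. j < n \<and> i \<in> Ms j}. min 1 (\<gamma> j))"
      using calculation assms(1) by (intro member_le_sum) auto
    ultimately show ?thesis by simp
  next
    case False
    then have "(\<Sum>j\<in>{j. j < n \<and> i \<in> Ms j}. min 1 (\<gamma> j)) = (\<Sum>j\<in>{j. j < n \<and> i \<in> Ms j}. \<gamma> j)"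
      by (intro sum.cong) auto
    then show ?thesis using assms(2)[OF i] by simp
  qed
qed (use assms(1) in auto)

lemma fpcc_cost_attains_min:
  assumes "fpcc_feasible m n Ms \<gamma>\<^sub>0"
  obtains \<gamma> where "fpcc_feasible m n Ms \<gamma>"
    "\<And>\<gamma>'. fpcc_feasible m n Ms \<gamma>' \<Longrightarrow> fpcc_cost A n Ms \<gamma> \<le> fpcc_cost A n Ms \<gamma>'"
proof -
  \<comment> \<open>Weights at indices \<open>\<ge> n\<close> affect neither feasibility nor cost; fixing them to \<open>0\<close>
    makes the feasible region compact.\<close>
  define trunc where "trunc \<gamma> j = (if j < n then \<gamma> j else 0)" for \<gamma> :: "nat \<Rightarrow> real" and j
  define K where "K = {\<gamma>. fpcc_feasible m n Ms \<gamma> \<and> (\<forall>j\<ge>n. \<gamma> j = 0)}"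
  have trunc: "trunc \<gamma> \<in> K" "fpcc_cost A n Ms (trunc \<gamma>) = fpcc_cost A n Ms \<gamma>"
    if "fpcc_feasible m n Ms \<gamma>" for \<gamma>
    using that fpcc_feasible_cong[of n "trunc \<gamma>" \<gamma>] fpcc_cost_cong[of n "trunc \<gamma>" \<gamma>]
    unfolding K_def trunc_def by auto
  have "K = PiE UNIV (\<lambda>j. if j < n then {0..1} else {0}) \<inter>
            (\<Inter>i\<in>{1..m}. {\<gamma>. 1 \<le> (\<Sum>j\<in>{j. j < n \<and> i \<in> Ms j}. \<gamma> j)})"
    using assms unfolding K_def fpcc_feasible_def
    by (auto simp: PiE_iff) (metis atLeastAtMost_iff singletonD not_le)+
  moreover have "compact (PiE UNIV (\<lambda>j. if j < n then {0..1::real} else {0}))"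
  proof -
    have "compactin (product_topology (\<lambda>_. euclidean) UNIV)
            (PiE UNIV (\<lambda>j. if j < n then {0..1::real} else {0}))"
      by (subst compactin_PiE) auto
    then show ?thesis by (simp add: euclidean_product_topology)
  qed
  moreover have "closed (\<Inter>i\<in>{1..m}. {\<gamma>::nat\<Rightarrow>real. 1 \<le> (\<Sum>j\<in>{j. j < n \<and> i \<in> Ms j}. \<gamma> j)})"
    by (intro closed_INT ballI closed_Collect_le continuous_intros) simp
  ultimately have "compact K" by (simp add: compact_Int_closed)
  moreover have "continuous_on K (fpcc_cost A n Ms)"
    unfolding fpcc_cost_def
    by (intro continuous_intros continuous_on_subset[OF continuous_on_product_coordinates]) simp
  moreover have "K \<noteq> {}" using trunc(1)[OF assms] by blast
  ultimately obtain \<gamma> where "\<gamma> \<in> K" and min: "\<And>\<gamma>'. \<gamma>' \<in> K \<Longrightarrow> fpcc_cost A n Ms \<gamma> \<le> fpcc_cost A n Ms \<gamma>'"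
    using continuous_attains_inf by metis
  show thesis
  proof
    show "fpcc_feasible m n Ms \<gamma>" using \<open>\<gamma> \<in> K\<close> by (simp add: K_def)
    show "fpcc_cost A n Ms \<gamma> \<le> fpcc_cost A n Ms \<gamma>'" if "fpcc_feasible m n Ms \<gamma>'" for \<gamma>'
      using min[OF trunc(1)[OF that]] trunc(2)[OF that] by simp
  qed
qed

lemma fpcc_feasible_minimal_sets_unit_weights:
  assumes h: "bij_betw h {..<N} {M. minimal_partial_clique_set m A M}"
  shows "fpcc_feasible m N h (\<lambda>_. 1)"
  unfolding fpcc_feasible_def
proof (intro conjI allI impI ballI)
  fix k assume "k < N"
  then have "minimal_partial_clique_set m A (h k)" using h by (auto dest: bij_betwE)
  then show "h k \<noteq> {}" "h k \<subseteq> {1..m}" by (auto simp: minimal_partial_clique_set_def)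
next
  fix i assume i: "i \<in> {1..m}"
  have "{i} \<in> h ` {..<N}"
    using minimal_partial_clique_set_singleton[OF i] bij_betw_imp_surj_on[OF h] by simp
  then have "{j. j < N \<and> i \<in> h j} \<noteq> {}" by auto
  then show "1 \<le> (\<Sum>j\<in>{j. j < N \<and> i \<in> h j}. 1::real)"
    by (simp add: Suc_le_eq card_gt_0_iff)
qed simp_all

lemma fpcc_dominated_by_minimal_sets:
  assumes h: "bij_betw h {..<N} {M. minimal_partial_clique_set m A M}"
    and feas: "fpcc_feasible m n Ms \<gamma>"
  obtains \<gamma>' where "fpcc_feasible m N h \<gamma>'" "fpcc_cost A N h \<gamma>' \<le> fpcc_cost A n Ms \<gamma>"
proof -
  define I where "I = {M. minimal_partial_clique_set m A M}"
  have finI: "finite I" unfolding I_def by (rule finite_minimal_partial_clique_sets)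
  have hI: "h k \<in> I" if "k < N" for k using h that unfolding I_def by (auto dest: bij_betwE)
  have Ms: "Ms j \<noteq> {}" "Ms j \<subseteq> {1..m}" "0 \<le> \<gamma> j" if "j < n" for j
    using feas that unfolding fpcc_feasible_def by auto
  have "\<forall>j. \<exists>Q. j < n \<longrightarrow> partition_on (Ms j) Q \<and> Q \<subseteq> I \<and>
                  (\<Sum>B\<in>Q. beta_MDS A B) \<le> beta_MDS A (Ms j)"
    using exists_minimal_partial_clique_partition[OF Ms(1,2)] unfolding I_def
    by (metis mem_Collect_eq subsetI)
  then obtain P where P: "\<And>j. j < n \<Longrightarrow> partition_on (Ms j) (P j)" "\<And>j. j < n \<Longrightarrow> P j \<subseteq> I"
    "\<And>j. j < n \<Longrightarrow> (\<Sum>B\<in>P j. beta_MDS A B) \<le> beta_MDS A (Ms j)"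
    by metis
  define W where "W S = (\<Sum>j<n. if S \<in> P j then \<gamma> j else 0)" for S
  have reindex: "(\<Sum>k<N. F (h k)) = (\<Sum>S\<in>I. F S)" for F :: "nat set \<Rightarrow> real"
    using sum.reindex_bij_betw[OF h[folded I_def]] .
  have cover: "(\<Sum>k\<in>{k. k < N \<and> i \<in> h k}. W (h k)) = (\<Sum>j\<in>{j. j < n \<and> i \<in> Ms j}. \<gamma> j)" for i
  proof -
    have "(\<Sum>k\<in>{k. k < N \<and> i \<in> h k}. W (h k)) = (\<Sum>S\<in>I. W S * of_bool (i \<in> S))"
      using reindex[of "\<lambda>S. W S * of_bool (i \<in> S)"] by (simp add: Int_def)
    also have "\<dots> = (\<Sum>j<n. \<gamma> j * (\<Sum>S\<in>P j. of_bool (i \<in> S)))"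
      unfolding W_def using finI P(2) by (rule sum_weighted_subcollections)
    also have "\<dots> = (\<Sum>j<n. \<gamma> j * of_bool (i \<in> Ms j))"
    proof (intro sum.cong refl)
      fix j assume "j \<in> {..<n}"
      then have "(\<Sum>S\<in>P j. of_bool (i \<in> S)) = (of_bool (i \<in> Ms j) :: real)"
        using P(1,2) finI by (intro partition_on_sum_of_bool_mem) (auto intro: finite_subset)
      then show "\<gamma> j * (\<Sum>S\<in>P j. of_bool (i \<in> S)) = \<gamma> j * of_bool (i \<in> Ms j)"
        by (simp only:)
    qed
    also have "\<dots> = (\<Sum>j\<in>{j. j < n \<and> i \<in> Ms j}. \<gamma> j)" by (simp add: Int_def)
    finally show ?thesis .
  qed
  have "fpcc_cost A N h (\<lambda>k. W (h k)) = (\<Sum>S\<in>I. W S * beta_MDS A S)"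
    unfolding fpcc_cost_def by (rule reindex)
  also have "\<dots> = (\<Sum>j<n. \<gamma> j * (\<Sum>S\<in>P j. beta_MDS A S))"
    unfolding W_def using finI P(2) by (rule sum_weighted_subcollections)
  also have "\<dots> \<le> fpcc_cost A n Ms \<gamma>"
    unfolding fpcc_cost_def using P(3) Ms(3) by (intro sum_mono mult_left_mono) auto
  finally have cost: "fpcc_cost A N h (\<lambda>k. W (h k)) \<le> fpcc_cost A n Ms \<gamma>" .
  have hk: "h k \<noteq> {}" "h k \<subseteq> {1..m}" "finite (h k)" if "k < N" for k
    using hI[OF that] unfolding I_def minimal_partial_clique_set_def by (auto intro: finite_subset)
  have W_nonneg: "0 \<le> W S" for S unfolding W_def using Ms(3) by (intro sum_nonneg) auto
  show thesis
  proof
    show "fpcc_feasible m N h (\<lambda>k. min 1 (W (h k)))"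
      using hk W_nonneg cover feas[unfolded fpcc_feasible_def] by (intro fpcc_feasible_min_1) auto
    have "fpcc_cost A N h (\<lambda>k. min 1 (W (h k))) \<le> fpcc_cost A N h (\<lambda>k. W (h k))"
      using hk by (intro fpcc_cost_mono) auto
    with cost show "fpcc_cost A N h (\<lambda>k. min 1 (W (h k))) \<le> fpcc_cost A n Ms \<gamma>"
      by linarith
  qed
qed

theorem proposition16:
  fixes m :: nat and A :: "nat \<Rightarrow> nat set"
  assumes "index_coding_instance m A"
  shows "\<exists>n Ms \<gamma>. fpcc_feasible m n Ms \<gamma> \<and>
           (\<forall>j<n. minimal_partial_clique_set m A (Ms j)) \<and>
           fpcc_cost A n Ms \<gamma> = beta_FPCC m A \<and>
           (\<forall>n' Ms' \<gamma>'. fpcc_feasible m n' Ms' \<gamma>' \<longrightarrow> fpcc_cost A n Ms \<gamma> \<le> fpcc_cost A n' Ms' \<gamma>')"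
proof -
  let ?I = "{M. minimal_partial_clique_set m A M}"
  let ?N = "card ?I"
  obtain h where h: "bij_betw h {..<?N} ?I"
    using ex_bij_betw_nat_finite[OF finite_minimal_partial_clique_sets]
    by (metis atLeast0LessThan)
  obtain \<gamma> where feas: "fpcc_feasible m ?N h \<gamma>"
    and opt: "\<And>\<gamma>'. fpcc_feasible m ?N h \<gamma>' \<Longrightarrow> fpcc_cost A ?N h \<gamma> \<le> fpcc_cost A ?N h \<gamma>'"
    using fpcc_cost_attains_min[OF fpcc_feasible_minimal_sets_unit_weights[OF h]] by blast
  have least: "fpcc_cost A ?N h \<gamma> \<le> fpcc_cost A n' Ms' \<gamma>'"
    if feas': "fpcc_feasible m n' Ms' \<gamma>'" for n' Ms' \<gamma>'
  proof -
    obtain \<gamma>'' where "fpcc_feasible m ?N h \<gamma>''" "fpcc_cost A ?N h \<gamma>'' \<le> fpcc_cost A n' Ms' \<gamma>'"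
      using fpcc_dominated_by_minimal_sets[OF h feas'] .
    with opt show ?thesis by (meson order_trans)
  qed
  have "beta_FPCC m A = fpcc_cost A ?N h \<gamma>"
    unfolding beta_FPCC_def using feas least by (intro cInf_eq_minimum) auto
  moreover have "\<forall>j<?N. minimal_partial_clique_set m A (h j)"
    using h by (auto dest: bij_betwE)
  ultimately show ?thesis using feas least by (intro exI[of _ ?N] exI[of _ h] exI[of _ \<gamma>]) simp
qed

end
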